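(* For every set $X\subseteq\omega$ there exists an infinite $X$-computable tournament $T$ on $\omega$ such that every infinite $T$-transitive subtournament $U$ satisfies $U\subseteq^{*}X$ or $U\subseteq^{*}\overline{X}$.
   Context: A tournament $T$ on a domain $D\subseteq\mathbb N$ is an irreflexive binary relation on $D$ such that for all distinct $x,y\in D$ exactly one of $T(x,y)$, $T(y,x)$ holds. A set $U\subseteq D$ is $T$-transitive (a transitive subtournament) if $T$ restricted to $U$ is transitive. $A\subseteq^* B$ means all but finitely many elements of $A$ lie in $B$. *)

theory Defs
  imports Main
begin

text \<open>Relative computability: the total mu-recursive functions relative to a
set X given as an extra basic function (Kleene's characterisation).  A function of arity n is modelled as a
HOL function on argument lists; only its values on lists of length n matter.\<close>

primrec prec :: "(nat list \<Rightarrow> nat) \<Rightarrow> (nat list \<Rightarrow> nat) \<Rightarrow> nat \<Rightarrow> nat list \<Rightarrow> nat" where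
  "prec g h 0 ys = g ys"
| "prec g h (Suc k) ys = h (k # prec g h k ys # ys)"

inductive recfn :: "nat set \<Rightarrow> nat \<Rightarrow> (nat list \<Rightarrow> nat) \<Rightarrow> bool" for X :: "nat set" where
  zero: "recfn X n (\<lambda>xs. 0)"
| succ: "recfn X 1 (\<lambda>xs. Suc (hd xs))"
| proj: "i < n \<Longrightarrow> recfn X n (\<lambda>xs. xs ! i)"
| orac: "recfn X 1 (\<lambda>xs. if hd xs \<in> X then 1 else 0)"
| comp: "\<lbrakk>recfn X m g; length fs = m; \<forall>i<m. recfn X n (fs ! i)\<rbrakk>
         \<Longrightarrow> recfn X n (\<lambda>xs. g (map (\<lambda>f. f xs) fs))"
| prim_rec: "\<lbrakk>recfn X n g; recfn X (Suc (Suc n)) h\<rbrakk>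
         \<Longrightarrow> recfn X (Suc n) (\<lambda>xs. prec g h (hd xs) (tl xs))"
| mu: "\<lbrakk>recfn X (Suc n) g; \<forall>ys. length ys = n \<longrightarrow> (\<exists>k. g (k # ys) = 0)\<rbrakk>
         \<Longrightarrow> recfn X n (\<lambda>ys. LEAST k. g (k # ys) = 0)"

definition rel_computable_in :: "nat set \<Rightarrow> (nat \<Rightarrow> nat \<Rightarrow> bool) \<Rightarrow> bool" where
  "rel_computable_in X T \<longleftrightarrow>
     (\<exists>f. recfn X 2 f \<and> (\<forall>x y. f [x, y] = (if T x y then 1 else 0)))"

definition tournament_on :: "nat set \<Rightarrow> (nat \<Rightarrow> nat \<Rightarrow> bool) \<Rightarrow> bool" where
  "tournament_on D T \<longleftrightarrow>
     (\<forall>x y. T x y \<longrightarrow> x \<in> D \<and> y \<in> D) \<and>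
     (\<forall>x\<in>D. \<not> T x x) \<and>
     (\<forall>x\<in>D. \<forall>y\<in>D. x \<noteq> y \<longrightarrow> (T x y \<longleftrightarrow> \<not> T y x))"

definition transitive_on :: "(nat \<Rightarrow> nat \<Rightarrow> bool) \<Rightarrow> nat set \<Rightarrow> bool" where
  "transitive_on T U \<longleftrightarrow> (\<forall>x\<in>U. \<forall>y\<in>U. \<forall>z\<in>U. T x y \<and> T y z \<longrightarrow> T x z)"

definition almost_subset :: "'a set \<Rightarrow> 'a set \<Rightarrow> bool" (infix "\<subseteq>\<^sup>*" 50) where
  "A \<subseteq>\<^sup>* B \<longleftrightarrow> finite (A - B)"

end

theory Submission
  imports Defs "HOL-Library.Infinite_Set"
begin

text \<open>Order the elements of X increasingly, those of its complement increasingly, and let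
every edge between the two sides point from the larger to the smaller element.  A transitive set meeting both sides infinitely often
contains a < b < c with a, c in X and b not in X; then a \<rightarrow> c \<rightarrow> b \<rightarrow> a is a 3-cycle.\<close>

definition computable_in :: "nat set \<Rightarrow> nat \<Rightarrow> (nat list \<Rightarrow> nat) \<Rightarrow> bool" where
  "computable_in X n F \<longleftrightarrow> (\<exists>f. recfn X n f \<and> (\<forall>xs. length xs = n \<longrightarrow> f xs = F xs))"

definition decidable_in :: "nat set \<Rightarrow> nat \<Rightarrow> (nat list \<Rightarrow> bool) \<Rightarrow> bool" where
  "decidable_in X n P \<longleftrightarrow> computable_in X n (\<lambda>xs. if P xs then 1 else 0)"

lemma computable_in_cong:
  "computable_in X n F \<Longrightarrow> (\<And>xs. length xs = n \<Longrightarrow> F xs = G xs) \<Longrightarrow> computable_in X n G"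
  unfolding computable_in_def by metis

lemma computable_in_zero: "computable_in X n (\<lambda>_. 0)"
  unfolding computable_in_def using recfn.zero by blast

lemma computable_in_Suc: "computable_in X 1 (\<lambda>xs. Suc (hd xs))"
  unfolding computable_in_def using recfn.succ by blast

lemma computable_in_nth: "i < n \<Longrightarrow> computable_in X n (\<lambda>xs. xs ! i)"
  unfolding computable_in_def using recfn.proj by blast

lemma computable_in_oracle: "computable_in X 1 (\<lambda>xs. if hd xs \<in> X then 1 else 0)"
  unfolding computable_in_def using recfn.orac by blast

lemma computable_in_compose:
  assumes G: "computable_in X m G" and len: "length Fs = m"
    and Fs: "\<forall>i<m. computable_in X n (Fs ! i)"
  shows "computable_in X n (\<lambda>xs. G (map (\<lambda>F. F xs) Fs))"
proof -
  obtain g where g: "recfn X m g" "\<forall>ys. length ys = m \<longrightarrow> g ys = G ys"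
    using G unfolding computable_in_def by blast
  obtain gs where gs: "\<forall>i<m. recfn X n (gs i) \<and> (\<forall>xs. length xs = n \<longrightarrow> gs i xs = (Fs ! i) xs)"
    using Fs unfolding computable_in_def by (metis (no_types, lifting))
  define fs where "fs = map gs [0..<m]"
  have fs: "recfn X n (fs ! i) \<and> (\<forall>xs. length xs = n \<longrightarrow> (fs ! i) xs = (Fs ! i) xs)" if "i < m" for i
    using gs that by (simp add: fs_def)
  have "length fs = m"
    by (simp add: fs_def)
  then have "recfn X n (\<lambda>xs. g (map (\<lambda>f. f xs) fs))"
    by (rule recfn.comp[OF g(1)]) (use fs in blast)
  moreover have "g (map (\<lambda>f. f xs) fs) = G (map (\<lambda>F. F xs) Fs)" if "length xs = n" for xs
  proof -
    have "map (\<lambda>f. f xs) fs = map (\<lambda>F. F xs) Fs"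
      using fs that len \<open>length fs = m\<close> by (intro nth_equalityI) auto
    then show ?thesis
      using g(2) len by simp
  qed
  ultimately show ?thesis
    unfolding computable_in_def by blast
qed

lemma computable_in_compose1:
  "computable_in X 1 G \<Longrightarrow> computable_in X n F \<Longrightarrow> computable_in X n (\<lambda>xs. G [F xs])"
  using computable_in_compose[of X 1 G "[F]" n] by simp

lemma computable_in_compose2:
  assumes "computable_in X 2 G" "computable_in X n F1" "computable_in X n F2"
  shows "computable_in X n (\<lambda>xs. G [F1 xs, F2 xs])"
  using computable_in_compose[of X 2 G "[F1, F2]" n] assms by (simp add: less_2_cases_iff)

lemma prec_cong:
  assumes "length ys = n" "\<forall>zs. length zs = n \<longrightarrow> g zs = G zs"
    "\<forall>zs. length zs = Suc (Suc n) \<longrightarrow> h zs = H zs"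
  shows "prec g h k ys = prec G H k ys"
  using assms by (induction k) auto

lemma computable_in_prec:
  assumes "computable_in X n G" "computable_in X (Suc (Suc n)) H"
  shows "computable_in X (Suc n) (\<lambda>xs. prec G H (hd xs) (tl xs))"
proof -
  obtain g where g: "recfn X n g" "\<forall>xs. length xs = n \<longrightarrow> g xs = G xs"
    using assms(1) unfolding computable_in_def by blast
  obtain h where h: "recfn X (Suc (Suc n)) h" "\<forall>xs. length xs = Suc (Suc n) \<longrightarrow> h xs = H xs"
    using assms(2) unfolding computable_in_def by blast
  show ?thesis
    unfolding computable_in_def using recfn.prim_rec[OF g(1) h(1)] prec_cong[OF _ g(2) h(2)]
    by (intro exI[of _ "\<lambda>xs. prec g h (hd xs) (tl xs)"]) auto
qed

lemma length_Suc_Suc_0_conv: "length xs = Suc (Suc 0) \<longleftrightarrow> (\<exists>a b. xs = [a, b])"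
  by (auto simp: length_Suc_conv)

lemma computable_in_pred: "computable_in X 1 (\<lambda>xs. hd xs - 1)"
proof -
  have "computable_in X (Suc 0) (\<lambda>xs. prec (\<lambda>_. 0) (\<lambda>ys. ys ! 0) (hd xs) (tl xs))"
    by (rule computable_in_prec[OF computable_in_zero computable_in_nth]) simp
  moreover have "prec (\<lambda>_. 0) (\<lambda>ys. ys ! 0) k ys = k - 1" for k ys
    by (cases k) auto
  ultimately show ?thesis
    by (simp add: computable_in_cong)
qed

lemma computable_in_add2: "computable_in X 2 (\<lambda>xs. xs ! 0 + xs ! 1)"
proof -
  have "computable_in X (Suc (Suc (Suc 0))) (\<lambda>ys. Suc (hd [ys ! 1]))"
    by (rule computable_in_compose1[OF computable_in_Suc computable_in_nth]) simp
  then have "computable_in X (Suc (Suc 0))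
      (\<lambda>xs. prec (\<lambda>ys. ys ! 0) (\<lambda>ys. Suc (hd [ys ! 1])) (hd xs) (tl xs))"
    using computable_in_prec[OF computable_in_nth[of 0 "Suc 0"]] by simp
  moreover have "prec (\<lambda>ys. ys ! 0) (\<lambda>ys. Suc (hd [ys ! 1])) k ys = k + ys ! 0" for k ys
    by (induction k) auto
  ultimately show ?thesis
    by (auto simp: numeral_2_eq_2 length_Suc_Suc_0_conv elim!: computable_in_cong)
qed

lemma computable_in_diff2: "computable_in X 2 (\<lambda>xs. xs ! 1 - xs ! 0)"
proof -
  have "computable_in X (Suc (Suc (Suc 0))) (\<lambda>ys. hd [ys ! 1] - 1)"
    by (rule computable_in_compose1[OF computable_in_pred computable_in_nth]) simp
  then have "computable_in X (Suc (Suc 0))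
      (\<lambda>xs. prec (\<lambda>ys. ys ! 0) (\<lambda>ys. hd [ys ! 1] - 1) (hd xs) (tl xs))"
    using computable_in_prec[OF computable_in_nth[of 0 "Suc 0"]] by simp
  moreover have "prec (\<lambda>ys. ys ! 0) (\<lambda>ys. hd [ys ! 1] - 1) k ys = ys ! 0 - k" for k ys
    by (induction k) auto
  ultimately show ?thesis
    by (auto simp: numeral_2_eq_2 length_Suc_Suc_0_conv elim!: computable_in_cong)
qed

lemma computable_in_add:
  "computable_in X n A \<Longrightarrow> computable_in X n B \<Longrightarrow> computable_in X n (\<lambda>xs. A xs + B xs)"
  using computable_in_compose2[OF computable_in_add2] by simp

lemma computable_in_diff:
  "computable_in X n A \<Longrightarrow> computable_in X n B \<Longrightarrow> computable_in X n (\<lambda>xs. A xs - B xs)"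
  using computable_in_compose2[OF computable_in_diff2, of X n B A] by simp

lemma computable_in_one: "computable_in X n (\<lambda>_. 1)"
  using computable_in_compose1[OF computable_in_Suc computable_in_zero] by simp

lemma decidable_in_mem: "computable_in X n A \<Longrightarrow> decidable_in X n (\<lambda>xs. A xs \<in> X)"
  unfolding decidable_in_def using computable_in_compose1[OF computable_in_oracle] by simp

lemma decidable_in_less:
  assumes "computable_in X n A" "computable_in X n B"
  shows "decidable_in X n (\<lambda>xs. A xs < B xs)"
proof -
  have "computable_in X n (\<lambda>xs. 1 - (1 - (B xs - A xs)))"
    by (intro computable_in_diff computable_in_one assms)
  then show ?thesis
    unfolding decidable_in_def by (rule computable_in_cong) simp
qed

lemma decidable_in_not: "decidable_in X n P \<Longrightarrow> decidable_in X n (\<lambda>xs. \<not> P xs)"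
  unfolding decidable_in_def
  by (drule computable_in_diff[OF computable_in_one]) (auto elim!: computable_in_cong)

lemma decidable_in_conj:
  assumes "decidable_in X n P" "decidable_in X n Q"
  shows "decidable_in X n (\<lambda>xs. P xs \<and> Q xs)"
proof -
  have "decidable_in X n (\<lambda>xs. \<not> Q xs)"
    using assms(2) by (rule decidable_in_not)
  then have "computable_in X n (\<lambda>xs. (if P xs then 1 else 0) - (if \<not> Q xs then 1 else 0))"
    using assms(1) unfolding decidable_in_def by (rule computable_in_diff[rotated])
  then show ?thesis
    unfolding decidable_in_def by (rule computable_in_cong) simp
qed

lemma decidable_in_iff:
  assumes "decidable_in X n P" "decidable_in X n Q"
  shows "decidable_in X n (\<lambda>xs. P xs \<longleftrightarrow> Q xs)"
proof -
  let ?p = "\<lambda>xs. if P xs then 1 else 0 :: nat" and ?q = "\<lambda>xs. if Q xs then 1 else 0 :: nat"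
  have "computable_in X n (\<lambda>xs. 1 - ((?p xs - ?q xs) + (?q xs - ?p xs)))"
    using assms unfolding decidable_in_def
    by (intro computable_in_diff computable_in_add computable_in_one)
  then show ?thesis
    unfolding decidable_in_def by (rule computable_in_cong) simp
qed

lemma rel_computable_in_if_decidable_in:
  "decidable_in X 2 (\<lambda>xs. T (xs ! 0) (xs ! 1)) \<Longrightarrow> rel_computable_in X T"
  unfolding rel_computable_in_def decidable_in_def computable_in_def by auto

definition side_tournament :: "nat set \<Rightarrow> nat \<Rightarrow> nat \<Rightarrow> bool" where
  "side_tournament X x y \<longleftrightarrow> x \<noteq> y \<and> ((x \<in> X \<longleftrightarrow> y \<in> X) \<longleftrightarrow> x < y)"

lemma tournament_on_side_tournament: "tournament_on UNIV (side_tournament X)"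
  unfolding tournament_on_def side_tournament_def by auto

lemma rel_computable_in_side_tournament: "rel_computable_in X (side_tournament X)"
proof (rule rel_computable_in_if_decidable_in)
  have x: "computable_in X 2 (\<lambda>xs. xs ! 0)" and y: "computable_in X 2 (\<lambda>xs. xs ! 1)"
    by (simp_all add: computable_in_nth)
  have "decidable_in X 2 (\<lambda>xs. \<not> (xs ! 0 < xs ! 1 \<longleftrightarrow> xs ! 1 < xs ! 0)
           \<and> ((xs ! 0 \<in> X \<longleftrightarrow> xs ! 1 \<in> X) \<longleftrightarrow> xs ! 0 < xs ! 1))"
    using x y by (intro decidable_in_conj decidable_in_not decidable_in_iff
        decidable_in_less decidable_in_mem)
  then show "decidable_in X 2 (\<lambda>xs. side_tournament X (xs ! 0) (xs ! 1))"
    unfolding side_tournament_def by (rule back_subst[of "decidable_in X 2"]) auto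
qed

lemma side_tournament_not_transitive:
  assumes "a < b" "b < c" "a \<in> X" "b \<notin> X" "c \<in> X"
  shows "side_tournament X a c" "side_tournament X c b" "\<not> side_tournament X a b"
  using assms unfolding side_tournament_def by auto

lemma transitive_on_side_tournament_almost_subset:
  assumes "infinite U" "transitive_on (side_tournament X) U"
  shows "U \<subseteq>\<^sup>* X \<or> U \<subseteq>\<^sup>* - X"
proof (rule ccontr)
  assume "\<not> ?thesis"
  then have inX: "infinite (U \<inter> X)" and outX: "infinite (U - X)"
    unfolding almost_subset_def by (auto simp: Diff_eq)
  obtain a where a: "a \<in> U" "a \<in> X"
    using inX infinite_imp_nonempty by blast
  obtain b where b: "a < b" "b \<in> U" "b \<notin> X"
    using outX unfolding infinite_nat_iff_unbounded by blast
  obtain c where c: "b < c" "c \<in> U" "c \<in> X"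
    using inX unfolding infinite_nat_iff_unbounded by blast
  show False
    using side_tournament_not_transitive[OF b(1) c(1) a(2) b(3) c(3)] assms(2) a b c
    unfolding transitive_on_def by blast
qed

theorem mainTheorem10:
  fixes X :: "nat set"
  shows "\<exists>T. tournament_on UNIV T \<and> rel_computable_in X T \<and>
           (\<forall>U. infinite U \<and> transitive_on T U \<longrightarrow> U \<subseteq>\<^sup>* X \<or> U \<subseteq>\<^sup>* (- X))"
  using tournament_on_side_tournament rel_computable_in_side_tournament
    transitive_on_side_tournament_almost_subset by blast

end
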